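(* Let $F$ be a contravariant functor from the category of unital $C^*$-algebras to the category of sets whose restriction to the full subcategory of commutative unital $C^*$-algebras is isomorphic to $\operatorname{Gelf}$. Then for every unital $C^*$-algebra $A$ and every integer $n\geq 3$, $F(\mathrm{M}_n(A))=\varnothing$.
   Context: Morphisms of unital $C^*$-algebras are identity-preserving $*$-homomorphisms. $\operatorname{Gelf}(A)$ is the set of maximal ideals of a commutative unital $C^*$-algebra $A$, with a morphism $f$ sent to $M\mapsto f^{-1}(M)$. $\mathrm{M}_n(A)$ is the $C^*$-algebra of $n\times n$ matrices over $A$. *)

theory Defs
  imports Complex_Main "HOL-Library.FuncSet"
begin

record 'a cstar =
  ca_carrier :: "'a set"
  ca_add :: "'a \<Rightarrow> 'a \<Rightarrow> 'a"
  ca_mul :: "'a \<Rightarrow> 'a \<Rightarrow> 'a"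
  ca_scale :: "complex \<Rightarrow> 'a \<Rightarrow> 'a"
  ca_star :: "'a \<Rightarrow> 'a"
  ca_norm :: "'a \<Rightarrow> real"
  ca_zero :: "'a"
  ca_one :: "'a"

definition ca_diff :: "'a cstar \<Rightarrow> 'a \<Rightarrow> 'a \<Rightarrow> 'a" where
  "ca_diff A x y = ca_add A x (ca_scale A (-1) y)"

definition unital_cstar_algebra :: "'a cstar \<Rightarrow> bool" where
  "unital_cstar_algebra A \<longleftrightarrow>
    ca_zero A \<in> ca_carrier A \<and> ca_one A \<in> ca_carrier A \<and>
    (\<forall>x\<in>ca_carrier A. \<forall>y\<in>ca_carrier A.
        ca_add A x y \<in> ca_carrier A \<and> ca_mul A x y \<in> ca_carrier A) \<and>
    (\<forall>c. \<forall>x\<in>ca_carrier A. ca_scale A c x \<in> ca_carrier A) \<and>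
    (\<forall>x\<in>ca_carrier A. ca_star A x \<in> ca_carrier A) \<and>
    \<comment> \<open>complex vector space\<close>
    (\<forall>x\<in>ca_carrier A. \<forall>y\<in>ca_carrier A. \<forall>z\<in>ca_carrier A.
        ca_add A (ca_add A x y) z = ca_add A x (ca_add A y z)) \<and>
    (\<forall>x\<in>ca_carrier A. \<forall>y\<in>ca_carrier A. ca_add A x y = ca_add A y x) \<and>
    (\<forall>x\<in>ca_carrier A. ca_add A (ca_zero A) x = x) \<and>
    (\<forall>x\<in>ca_carrier A. ca_add A x (ca_scale A (-1) x) = ca_zero A) \<and>
    (\<forall>x\<in>ca_carrier A. ca_scale A 1 x = x) \<and>
    (\<forall>a b. \<forall>x\<in>ca_carrier A. ca_scale A (a * b) x = ca_scale A a (ca_scale A b x)) \<and>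
    (\<forall>a b. \<forall>x\<in>ca_carrier A. ca_scale A (a + b) x = ca_add A (ca_scale A a x) (ca_scale A b x)) \<and>
    (\<forall>a. \<forall>x\<in>ca_carrier A. \<forall>y\<in>ca_carrier A.
        ca_scale A a (ca_add A x y) = ca_add A (ca_scale A a x) (ca_scale A a y)) \<and>
    \<comment> \<open>unital associative algebra\<close>
    (\<forall>x\<in>ca_carrier A. \<forall>y\<in>ca_carrier A. \<forall>z\<in>ca_carrier A.
        ca_mul A (ca_mul A x y) z = ca_mul A x (ca_mul A y z) \<and>
        ca_mul A x (ca_add A y z) = ca_add A (ca_mul A x y) (ca_mul A x z) \<and>
        ca_mul A (ca_add A x y) z = ca_add A (ca_mul A x z) (ca_mul A y z)) \<and>
    (\<forall>c. \<forall>x\<in>ca_carrier A. \<forall>y\<in>ca_carrier A.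
        ca_scale A c (ca_mul A x y) = ca_mul A (ca_scale A c x) y \<and>
        ca_scale A c (ca_mul A x y) = ca_mul A x (ca_scale A c y)) \<and>
    (\<forall>x\<in>ca_carrier A. ca_mul A (ca_one A) x = x \<and> ca_mul A x (ca_one A) = x) \<and>
    \<comment> \<open>involution\<close>
    (\<forall>x\<in>ca_carrier A. ca_star A (ca_star A x) = x) \<and>
    (\<forall>x\<in>ca_carrier A. \<forall>y\<in>ca_carrier A.
        ca_star A (ca_add A x y) = ca_add A (ca_star A x) (ca_star A y) \<and>
        ca_star A (ca_mul A x y) = ca_mul A (ca_star A y) (ca_star A x)) \<and>
    (\<forall>c. \<forall>x\<in>ca_carrier A. ca_star A (ca_scale A c x) = ca_scale A (cnj c) (ca_star A x)) \<and>
    \<comment> \<open>submultiplicative norm with the C*-identity\<close>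
    (\<forall>x\<in>ca_carrier A. 0 \<le> ca_norm A x \<and> (ca_norm A x = 0 \<longleftrightarrow> x = ca_zero A)) \<and>
    (\<forall>x\<in>ca_carrier A. \<forall>y\<in>ca_carrier A.
        ca_norm A (ca_add A x y) \<le> ca_norm A x + ca_norm A y \<and>
        ca_norm A (ca_mul A x y) \<le> ca_norm A x * ca_norm A y) \<and>
    (\<forall>c. \<forall>x\<in>ca_carrier A. ca_norm A (ca_scale A c x) = cmod c * ca_norm A x) \<and>
    (\<forall>x\<in>ca_carrier A. ca_norm A (ca_mul A (ca_star A x) x) = (ca_norm A x)\<^sup>2) \<and>
    \<comment> \<open>completeness\<close>
    (\<forall>s::nat \<Rightarrow> 'a. (\<forall>k. s k \<in> ca_carrier A) \<and>
         (\<forall>e>0. \<exists>N. \<forall>m\<ge>N. \<forall>k\<ge>N. ca_norm A (ca_diff A (s m) (s k)) < e) \<longrightarrow>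
         (\<exists>x\<in>ca_carrier A. \<forall>e>0. \<exists>N. \<forall>k\<ge>N. ca_norm A (ca_diff A (s k) x) < e))"

definition commutative_cstar :: "'a cstar \<Rightarrow> bool" where
  "commutative_cstar A \<longleftrightarrow> unital_cstar_algebra A \<and>
     (\<forall>x\<in>ca_carrier A. \<forall>y\<in>ca_carrier A. ca_mul A x y = ca_mul A y x)"

definition cstar_hom :: "'a cstar \<Rightarrow> 'b cstar \<Rightarrow> ('a \<Rightarrow> 'b) \<Rightarrow> bool" where
  "cstar_hom A B f \<longleftrightarrow>
     f \<in> ca_carrier A \<rightarrow> ca_carrier B \<and>
     (\<forall>x\<in>ca_carrier A. \<forall>y\<in>ca_carrier A.
        f (ca_add A x y) = ca_add B (f x) (f y) \<and> f (ca_mul A x y) = ca_mul B (f x) (f y)) \<and>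
     (\<forall>c. \<forall>x\<in>ca_carrier A. f (ca_scale A c x) = ca_scale B c (f x)) \<and>
     (\<forall>x\<in>ca_carrier A. f (ca_star A x) = ca_star B (f x)) \<and>
     f (ca_one A) = ca_one B"

text \<open>Morphisms of the category: homomorphisms, made extensional (undefined off the carrier)
  so that a morphism is determined by its values on the carrier.\<close>

definition cstar_mor :: "'a cstar \<Rightarrow> 'b cstar \<Rightarrow> ('a \<Rightarrow> 'b) \<Rightarrow> bool" where
  "cstar_mor A B f \<longleftrightarrow> cstar_hom A B f \<and> f \<in> extensional (ca_carrier A)"

definition cstar_isomorphic :: "'a cstar \<Rightarrow> 'b cstar \<Rightarrow> bool" where
  "cstar_isomorphic A B \<longleftrightarrow>
     (\<exists>f. cstar_hom A B f \<and> bij_betw f (ca_carrier A) (ca_carrier B))"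

definition contravariant_functor ::
  "('u cstar \<Rightarrow> 'v set) \<Rightarrow> (('u \<Rightarrow> 'u) \<Rightarrow> 'u cstar \<Rightarrow> 'u cstar \<Rightarrow> 'v \<Rightarrow> 'v) \<Rightarrow> bool" where
  "contravariant_functor F Fmor \<longleftrightarrow>
     (\<forall>A B f. unital_cstar_algebra A \<and> unital_cstar_algebra B \<and> cstar_mor A B f \<longrightarrow>
        Fmor f A B \<in> F B \<rightarrow> F A) \<and>
     (\<forall>A. unital_cstar_algebra A \<longrightarrow>
        (\<forall>x\<in>F A. Fmor (restrict id (ca_carrier A)) A A x = x)) \<and>
     (\<forall>A B C f g. unital_cstar_algebra A \<and> unital_cstar_algebra B \<and> unital_cstar_algebra C \<and>
        cstar_mor A B f \<and> cstar_mor B C g \<longrightarrow>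
        (\<forall>x\<in>F C. Fmor (compose (ca_carrier A) g f) A C x = Fmor f A B (Fmor g B C x)))"

definition cstar_ideal :: "'a cstar \<Rightarrow> 'a set \<Rightarrow> bool" where
  "cstar_ideal A I \<longleftrightarrow> I \<subseteq> ca_carrier A \<and> ca_zero A \<in> I \<and>
     (\<forall>x\<in>I. \<forall>y\<in>I. ca_add A x y \<in> I) \<and>
     (\<forall>x\<in>I. ca_scale A (-1) x \<in> I) \<and>
     (\<forall>x\<in>I. \<forall>a\<in>ca_carrier A. ca_mul A a x \<in> I \<and> ca_mul A x a \<in> I)"

definition maximal_ideal :: "'a cstar \<Rightarrow> 'a set \<Rightarrow> bool" where
  "maximal_ideal A M \<longleftrightarrow> cstar_ideal A M \<and> M \<noteq> ca_carrier A \<and>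
     (\<forall>J. cstar_ideal A J \<and> M \<subseteq> J \<and> J \<noteq> ca_carrier A \<longrightarrow> J = M)"

definition Gelf :: "'a cstar \<Rightarrow> 'a set set" where
  "Gelf A = {M. maximal_ideal A M}"

definition Gelf_mor :: "('a \<Rightarrow> 'b) \<Rightarrow> 'a cstar \<Rightarrow> 'b set \<Rightarrow> 'a set" where
  "Gelf_mor f A M = {x \<in> ca_carrier A. f x \<in> M}"

definition gelf_nat_iso ::
  "('u cstar \<Rightarrow> 'v set) \<Rightarrow> (('u \<Rightarrow> 'u) \<Rightarrow> 'u cstar \<Rightarrow> 'u cstar \<Rightarrow> 'v \<Rightarrow> 'v)
     \<Rightarrow> ('u cstar \<Rightarrow> 'v \<Rightarrow> 'u set) \<Rightarrow> bool" where
  "gelf_nat_iso F Fmor \<eta> \<longleftrightarrow>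
     (\<forall>A. commutative_cstar A \<longrightarrow> bij_betw (\<eta> A) (F A) (Gelf A)) \<and>
     (\<forall>A B f. commutative_cstar A \<and> commutative_cstar B \<and> cstar_mor A B f \<longrightarrow>
        (\<forall>x\<in>F B. \<eta> A (Fmor f A B x) = Gelf_mor f A (\<eta> B x)))"

fun ca_sum :: "'a cstar \<Rightarrow> (nat \<Rightarrow> 'a) \<Rightarrow> nat \<Rightarrow> 'a" where
  "ca_sum A f 0 = ca_zero A"
| "ca_sum A f (Suc k) = ca_add A (ca_sum A f k) (f k)"

text \<open>Vectors in the Hilbert A-module A^n, with A-valued inner product.\<close>

definition mod_vecs :: "'a cstar \<Rightarrow> nat \<Rightarrow> (nat \<Rightarrow> 'a) set" where
  "mod_vecs A n = {v. \<forall>i<n. v i \<in> ca_carrier A}"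

definition mod_inner :: "'a cstar \<Rightarrow> nat \<Rightarrow> (nat \<Rightarrow> 'a) \<Rightarrow> (nat \<Rightarrow> 'a) \<Rightarrow> 'a" where
  "mod_inner A n v w = ca_sum A (\<lambda>i. ca_mul A (ca_star A (v i)) (w i)) n"

definition mat_apply :: "'a cstar \<Rightarrow> nat \<Rightarrow> (nat \<Rightarrow> nat \<Rightarrow> 'a) \<Rightarrow> (nat \<Rightarrow> 'a) \<Rightarrow> nat \<Rightarrow> 'a" where
  "mat_apply A n M v = (\<lambda>i. ca_sum A (\<lambda>k. ca_mul A (M i k) (v k)) n)"

definition mat_cstar :: "'a cstar \<Rightarrow> nat \<Rightarrow> (nat \<Rightarrow> nat \<Rightarrow> 'a) cstar" where
  "mat_cstar A n =
    \<lparr> ca_carrier = {M. (\<forall>i<n. \<forall>j<n. M i j \<in> ca_carrier A) \<and>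
                        (\<forall>i j. \<not> (i < n \<and> j < n) \<longrightarrow> M i j = ca_zero A)},
      ca_add = (\<lambda>M N i j. if i < n \<and> j < n then ca_add A (M i j) (N i j) else ca_zero A),
      ca_mul = (\<lambda>M N i j. if i < n \<and> j < n
                  then ca_sum A (\<lambda>k. ca_mul A (M i k) (N k j)) n else ca_zero A),
      ca_scale = (\<lambda>c M i j. if i < n \<and> j < n then ca_scale A c (M i j) else ca_zero A),
      ca_star = (\<lambda>M i j. if i < n \<and> j < n then ca_star A (M j i) else ca_zero A),
      ca_norm = (\<lambda>M. sqrt (Sup {ca_norm A (mod_inner A n (mat_apply A n M v) (mat_apply A n M v)) | v.
                        v \<in> mod_vecs A n \<and> ca_norm A (mod_inner A n v v) \<le> 1})),
      ca_zero = (\<lambda>i j. ca_zero A),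
      ca_one = (\<lambda>i j. if i < n \<and> j < n then (if i = j then ca_one A else ca_zero A) else ca_zero A) \<rparr>"

end

theory Submission
  imports Defs
begin

(*
  A point x of F(B) gives, through the natural isomorphism with Gelf, a maximal ideal in every
  commutative C*-subalgebra of B, and naturality makes these ideals compatible with inclusions.
  In the bicommutant of a finite family of pairwise orthogonal self-adjoint elements summing to 1,
  a maximal ideal omits exactly one member of the family; by compatibility, whether an element p is
  omitted is already decided in the algebra generated by p alone.  Hence x defines a two-valued
  valuation on such elements choosing exactly one member of every orthogonal resolution of the
  identity.  Through the isomorphism with M_n(A), n >= 3, the scalar matrices supply the rank-one
  projections onto the rays of a Kochen-Specker configuration in R^3 (padded by diagonal units),
  and such a configuration admits no valuation of this kind.
*)

lemma carrier_update_simps: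
  "ca_carrier (A\<lparr>ca_carrier := T\<rparr>) = T" "ca_add (A\<lparr>ca_carrier := T\<rparr>) = ca_add A"
  "ca_mul (A\<lparr>ca_carrier := T\<rparr>) = ca_mul A" "ca_scale (A\<lparr>ca_carrier := T\<rparr>) = ca_scale A"
  "ca_star (A\<lparr>ca_carrier := T\<rparr>) = ca_star A" "ca_norm (A\<lparr>ca_carrier := T\<rparr>) = ca_norm A"
  "ca_zero (A\<lparr>ca_carrier := T\<rparr>) = ca_zero A" "ca_one (A\<lparr>ca_carrier := T\<rparr>) = ca_one A"
  by simp_all

locale unital_cstar =
  fixes A :: "'a cstar"
  assumes unital_cstar_algebra: "unital_cstar_algebra A"
begin

abbreviation carrier where "carrier \<equiv> ca_carrier A"
abbreviation add_A (infixl "\<oplus>" 65) where "x \<oplus> y \<equiv> ca_add A x y"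
abbreviation mul_A (infixl "\<otimes>" 70) where "x \<otimes> y \<equiv> ca_mul A x y"
abbreviation "scale \<equiv> ca_scale A"
abbreviation "star \<equiv> ca_star A"
abbreviation "nrm \<equiv> ca_norm A"
abbreviation zero_A ("\<zero>") where "\<zero> \<equiv> ca_zero A"
abbreviation one_A ("\<one>") where "\<one> \<equiv> ca_one A"
abbreviation neg_A ("\<ominus> _" [81] 80) where "\<ominus> x \<equiv> ca_scale A (-1) x"

lemmas cstar_axioms = unital_cstar_algebra[unfolded unital_cstar_algebra_def]

lemma zero_closed [simp]: "\<zero> \<in> carrier" using cstar_axioms by (elim conjE) blast
lemma one_closed [simp]: "\<one> \<in> carrier" using cstar_axioms by (elim conjE) blast
lemma add_closed [simp]: "x \<in> carrier \<Longrightarrow> y \<in> carrier \<Longrightarrow> x \<oplus> y \<in> carrier" using cstar_axioms by (elim conjE) blast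
lemma mul_closed [simp]: "x \<in> carrier \<Longrightarrow> y \<in> carrier \<Longrightarrow> x \<otimes> y \<in> carrier" using cstar_axioms by (elim conjE) blast
lemma scale_closed [simp]: "x \<in> carrier \<Longrightarrow> scale c x \<in> carrier" using cstar_axioms by (elim conjE) blast
lemma star_closed [simp]: "x \<in> carrier \<Longrightarrow> star x \<in> carrier" using cstar_axioms by (elim conjE) blast
lemma add_assoc: "x \<in> carrier \<Longrightarrow> y \<in> carrier \<Longrightarrow> z \<in> carrier \<Longrightarrow> x \<oplus> y \<oplus> z = x \<oplus> (y \<oplus> z)"
  using cstar_axioms by (elim conjE) blast
lemma add_commute: "x \<in> carrier \<Longrightarrow> y \<in> carrier \<Longrightarrow> x \<oplus> y = y \<oplus> x"
  using cstar_axioms by (elim conjE) blast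
lemma add_left_commute: "x \<in> carrier \<Longrightarrow> y \<in> carrier \<Longrightarrow> z \<in> carrier \<Longrightarrow> x \<oplus> (y \<oplus> z) = y \<oplus> (x \<oplus> z)"
  by (metis add_assoc add_commute)
lemmas add_ac = add_assoc add_commute add_left_commute
lemma add_add_swap:
  "a \<in> carrier \<Longrightarrow> b \<in> carrier \<Longrightarrow> c \<in> carrier \<Longrightarrow> d \<in> carrier \<Longrightarrow>
   (a \<oplus> b) \<oplus> (c \<oplus> d) = (a \<oplus> c) \<oplus> (b \<oplus> d)"
  by (simp add: add_assoc add_left_commute[of b c d])
lemma add_zero_left [simp]: "x \<in> carrier \<Longrightarrow> \<zero> \<oplus> x = x"
  using cstar_axioms by (elim conjE) blast
lemma add_zero_right [simp]: "x \<in> carrier \<Longrightarrow> x \<oplus> \<zero> = x"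
  using add_commute[of x \<zero>] by simp
lemma add_neg [simp]: "x \<in> carrier \<Longrightarrow> x \<oplus> \<ominus> x = \<zero>"
  using cstar_axioms by (elim conjE) blast
lemma scale_one [simp]: "x \<in> carrier \<Longrightarrow> scale 1 x = x"
  using cstar_axioms by (elim conjE) blast
lemma scale_mult: "x \<in> carrier \<Longrightarrow> scale (a * b) x = scale a (scale b x)"
  using cstar_axioms by (elim conjE) blast
lemma scale_left_distrib: "x \<in> carrier \<Longrightarrow> scale (a + b) x = scale a x \<oplus> scale b x"
  using cstar_axioms by (elim conjE) blast
lemma scale_right_distrib: "x \<in> carrier \<Longrightarrow> y \<in> carrier \<Longrightarrow> scale a (x \<oplus> y) = scale a x \<oplus> scale a y"
  using cstar_axioms by (elim conjE) metis
lemma mul_assoc: "x \<in> carrier \<Longrightarrow> y \<in> carrier \<Longrightarrow> z \<in> carrier \<Longrightarrow> x \<otimes> y \<otimes> z = x \<otimes> (y \<otimes> z)"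
  using cstar_axioms by (elim conjE) metis
lemma distrib_left: "x \<in> carrier \<Longrightarrow> y \<in> carrier \<Longrightarrow> z \<in> carrier \<Longrightarrow> x \<otimes> (y \<oplus> z) = x \<otimes> y \<oplus> x \<otimes> z"
  using cstar_axioms by (elim conjE) metis
lemma distrib_right: "x \<in> carrier \<Longrightarrow> y \<in> carrier \<Longrightarrow> z \<in> carrier \<Longrightarrow> (x \<oplus> y) \<otimes> z = x \<otimes> z \<oplus> y \<otimes> z"
  using cstar_axioms by (elim conjE) metis
lemma scale_mul_left: "x \<in> carrier \<Longrightarrow> y \<in> carrier \<Longrightarrow> scale c x \<otimes> y = scale c (x \<otimes> y)"
  using cstar_axioms by (elim conjE) metis
lemma scale_mul_right: "x \<in> carrier \<Longrightarrow> y \<in> carrier \<Longrightarrow> x \<otimes> scale c y = scale c (x \<otimes> y)"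
  using cstar_axioms by (elim conjE) metis
lemma mul_one_left [simp]: "x \<in> carrier \<Longrightarrow> \<one> \<otimes> x = x"
  using cstar_axioms by (elim conjE) metis
lemma mul_one_right [simp]: "x \<in> carrier \<Longrightarrow> x \<otimes> \<one> = x"
  using cstar_axioms by (elim conjE) metis
lemma star_star [simp]: "x \<in> carrier \<Longrightarrow> star (star x) = x"
  using cstar_axioms by (elim conjE) metis
lemma star_add: "x \<in> carrier \<Longrightarrow> y \<in> carrier \<Longrightarrow> star (x \<oplus> y) = star x \<oplus> star y"
  using cstar_axioms by (elim conjE) metis
lemma star_mul: "x \<in> carrier \<Longrightarrow> y \<in> carrier \<Longrightarrow> star (x \<otimes> y) = star y \<otimes> star x"
  using cstar_axioms by (elim conjE) metis
lemma star_scale: "x \<in> carrier \<Longrightarrow> star (scale c x) = scale (cnj c) (star x)"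
  using cstar_axioms by (elim conjE) metis
lemma norm_ge_zero: "x \<in> carrier \<Longrightarrow> 0 \<le> nrm x"
  using cstar_axioms by (elim conjE) metis
lemma norm_eq_zero_iff: "x \<in> carrier \<Longrightarrow> nrm x = 0 \<longleftrightarrow> x = \<zero>"
  using cstar_axioms by (elim conjE) metis
lemma norm_triangle: "x \<in> carrier \<Longrightarrow> y \<in> carrier \<Longrightarrow> nrm (x \<oplus> y) \<le> nrm x + nrm y"
  using cstar_axioms by (elim conjE) metis
lemma norm_mul_le: "x \<in> carrier \<Longrightarrow> y \<in> carrier \<Longrightarrow> nrm (x \<otimes> y) \<le> nrm x * nrm y"
  using cstar_axioms by (elim conjE) metis
lemma norm_scale: "x \<in> carrier \<Longrightarrow> nrm (scale c x) = cmod c * nrm x"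
  using cstar_axioms by (elim conjE) metis
lemma norm_star_mul: "x \<in> carrier \<Longrightarrow> nrm (star x \<otimes> x) = (nrm x)\<^sup>2"
  using cstar_axioms by (elim conjE) (erule ballE[where x=x]; simp)
lemma cauchy_complete:
  "\<forall>s::nat \<Rightarrow> 'a. (\<forall>k. s k \<in> carrier) \<and> (\<forall>e>0. \<exists>N. \<forall>m\<ge>N. \<forall>k\<ge>N. nrm (ca_diff A (s m) (s k)) < e) \<longrightarrow>
     (\<exists>x\<in>carrier. \<forall>e>0. \<exists>N. \<forall>k\<ge>N. nrm (ca_diff A (s k) x) < e)"
  using cstar_axioms by (elim conjE) assumption
lemma unital_cstar_subalgebra:
  assumes sub: "T \<subseteq> carrier" and T: "\<zero> \<in> T" "\<one> \<in> T"
    "\<And>x y. x \<in> T \<Longrightarrow> y \<in> T \<Longrightarrow> x \<oplus> y \<in> T"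
    "\<And>x y. x \<in> T \<Longrightarrow> y \<in> T \<Longrightarrow> x \<otimes> y \<in> T"
    "\<And>c x. x \<in> T \<Longrightarrow> scale c x \<in> T" "\<And>x. x \<in> T \<Longrightarrow> star x \<in> T"
  and closed: "\<And>(s::nat \<Rightarrow> 'a) x. \<forall>k. s k \<in> T \<Longrightarrow> x \<in> carrier \<Longrightarrow>
      \<forall>e>0. \<exists>N. \<forall>k\<ge>N. nrm (ca_diff A (s k) x) < e \<Longrightarrow> x \<in> T"
  shows "unital_cstar_algebra (A\<lparr>ca_carrier := T\<rparr>)"
proof -
  have "\<exists>x\<in>T. \<forall>e>0. \<exists>N. \<forall>k\<ge>N. nrm (ca_diff A (s k) x) < e"
    if "\<forall>k. s k \<in> T" "\<forall>e>0. \<exists>N. \<forall>m\<ge>N. \<forall>k\<ge>N. nrm (ca_diff A (s m) (s k)) < e" for s :: "nat \<Rightarrow> 'a"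
    using cauchy_complete closed that sub by blast
  then show ?thesis
    using sub T unfolding unital_cstar_algebra_def ca_diff_def carrier_update_simps
    by (intro conjI) (simp_all add: subset_eq add_ac
        scale_mult scale_left_distrib scale_right_distrib mul_assoc distrib_left distrib_right
        scale_mul_left scale_mul_right star_add star_mul star_scale norm_ge_zero norm_eq_zero_iff
        norm_triangle norm_mul_le norm_scale norm_star_mul)
qed

lemma scale_zero_left [simp]: "x \<in> carrier \<Longrightarrow> scale 0 x = \<zero>"
  using scale_left_distrib[of x 1 "-1"] by simp

lemma scale_zero_right [simp]: "scale c \<zero> = \<zero>"
  using scale_mult[of \<zero> c 0] by simp

lemma mul_zero_right [simp]: "x \<in> carrier \<Longrightarrow> x \<otimes> \<zero> = \<zero>"
  using scale_mul_right[of x \<zero> 0] by simp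

lemma mul_zero_left [simp]: "x \<in> carrier \<Longrightarrow> \<zero> \<otimes> x = \<zero>"
  using scale_mul_left[of \<zero> x 0] by simp

lemma add_neg_eq_zero_imp_eq:
  assumes "x \<in> carrier" "y \<in> carrier" "x \<oplus> \<ominus> y = \<zero>"
  shows "x = y"
proof -
  have "x = x \<oplus> (\<ominus> y \<oplus> y)" using assms add_commute[of "\<ominus> y" y] by simp
  also have "\<dots> = y" using assms by (simp add: add_assoc[symmetric])
  finally show ?thesis .
qed

lemma star_one [simp]: "star \<one> = \<one>"
  using star_mul[of "star \<one>" \<one>] by simp

lemma scale_one_add: "scale a \<one> \<oplus> scale b \<one> = scale (a + b) \<one>"
  by (simp add: scale_left_distrib)

lemma scale_one_mul: "scale a \<one> \<otimes> scale b \<one> = scale (a * b) \<one>"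
  by (simp add: scale_mul_left scale_mult)

lemma ca_sum_cong: "(\<And>k. k < m \<Longrightarrow> f k = g k) \<Longrightarrow> ca_sum A f m = ca_sum A g m"
  by (induction m) auto

lemma ca_sum_scale_one: "ca_sum A (\<lambda>k. scale (c k) \<one>) m = scale (\<Sum>k<m. c k) \<one>"
  by (induction m) (auto simp: scale_one_add)

end

section \<open>Commutants and bicommutants\<close>

definition commutant :: "'a cstar \<Rightarrow> 'a set \<Rightarrow> 'a set" where
  "commutant A S = {y \<in> ca_carrier A. \<forall>s\<in>S. ca_mul A s y = ca_mul A y s}"

definition bicommutant :: "'a cstar \<Rightarrow> 'a set \<Rightarrow> 'a set" where
  "bicommutant A S = commutant A (commutant A S)"

definition commuting_star_set :: "'a cstar \<Rightarrow> 'a set \<Rightarrow> bool" where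
  "commuting_star_set A S \<longleftrightarrow> S \<subseteq> ca_carrier A \<and>
     (\<forall>a\<in>S. \<forall>b\<in>S. ca_mul A a b = ca_mul A b a) \<and> (\<forall>a\<in>S. ca_star A a \<in> S)"

definition bicommutant_algebra :: "'a cstar \<Rightarrow> 'a set \<Rightarrow> 'a cstar" where
  "bicommutant_algebra A S = A\<lparr>ca_carrier := bicommutant A S\<rparr>"

context unital_cstar
begin

lemma commutant_subset_carrier: "commutant A S \<subseteq> carrier"
  unfolding commutant_def by blast

lemma commutant_antimono: "S \<subseteq> S' \<Longrightarrow> commutant A S' \<subseteq> commutant A S"
  unfolding commutant_def by blast

lemma bicommutant_mono: "S \<subseteq> S' \<Longrightarrow> bicommutant A S \<subseteq> bicommutant A S'"
  unfolding bicommutant_def by (intro commutant_antimono)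

lemma subset_bicommutant: "S \<subseteq> carrier \<Longrightarrow> S \<subseteq> bicommutant A S"
  unfolding bicommutant_def commutant_def by auto

lemma commutant_closed:
  assumes "S \<subseteq> carrier"
  shows commutant_zero: "\<zero> \<in> commutant A S"
    and commutant_one: "\<one> \<in> commutant A S"
    and commutant_add: "x \<in> commutant A S \<Longrightarrow> y \<in> commutant A S \<Longrightarrow> x \<oplus> y \<in> commutant A S"
    and commutant_mul: "x \<in> commutant A S \<Longrightarrow> y \<in> commutant A S \<Longrightarrow> x \<otimes> y \<in> commutant A S"
    and commutant_scale: "x \<in> commutant A S \<Longrightarrow> scale c x \<in> commutant A S"
  using assms unfolding commutant_def
  by (auto simp: subset_eq distrib_left distrib_right scale_mul_left scale_mul_right)
     (metis mul_assoc)

lemma commutant_star: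
  assumes S: "S \<subseteq> carrier" "\<And>s. s \<in> S \<Longrightarrow> star s \<in> S" and x: "x \<in> commutant A S"
  shows "star x \<in> commutant A S"
proof -
  have "s \<otimes> star x = star x \<otimes> s" if "s \<in> S" for s
  proof -
    have sx: "s \<in> carrier" "x \<in> carrier" using x S that unfolding commutant_def by auto
    have "star s \<otimes> x = x \<otimes> star s" using x S that unfolding commutant_def by blast
    then have "star (star s \<otimes> x) = star (x \<otimes> star s)" by simp
    then show ?thesis using sx by (simp add: star_mul)
  qed
  with x show ?thesis unfolding commutant_def by auto
qed

lemma commutant_limit:
  fixes s :: "nat \<Rightarrow> 'a"
  assumes S: "S \<subseteq> carrier" and s: "\<forall>k. s k \<in> commutant A S" and x: "x \<in> carrier"
    and lim: "\<forall>e>0. \<exists>N. \<forall>k\<ge>N. nrm (ca_diff A (s k) x) < e"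
  shows "x \<in> commutant A S"
proof -
  have "t \<otimes> x = x \<otimes> t" if t: "t \<in> S" for t
  proof -
    have tc: "t \<in> carrier" using t S by blast
    define d where "d = t \<otimes> x \<oplus> \<ominus> (x \<otimes> t)"
    have dc: "d \<in> carrier" using tc x by (simp add: d_def)
    \<comment> \<open>Since t commutes with s k, its commutator with x is that of w = s k - x with t.\<close>
    have bound: "nrm d \<le> 2 * nrm t * nrm (ca_diff A (s k) x)" for k
    proof -
      define w where "w = ca_diff A (s k) x"
      have sk: "s k \<in> carrier" "t \<otimes> s k = s k \<otimes> t" using s t unfolding commutant_def by auto
      have wc: "w \<in> carrier" using sk x by (simp add: w_def ca_diff_def)
      have "w \<otimes> t \<oplus> \<ominus> (t \<otimes> w) = (s k \<otimes> t \<oplus> \<ominus> (x \<otimes> t)) \<oplus> (\<ominus> (s k \<otimes> t) \<oplus> t \<otimes> x)"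
        using sk x tc
        by (simp add: w_def ca_diff_def distrib_left distrib_right scale_mul_left scale_mul_right
            scale_right_distrib scale_mult[symmetric])
      also have "\<dots> = (s k \<otimes> t \<oplus> \<ominus> (s k \<otimes> t)) \<oplus> (\<ominus> (x \<otimes> t) \<oplus> t \<otimes> x)"
        using sk x tc by (simp only: add_add_swap mul_closed scale_closed)
      also have "\<dots> = d"
        using sk x tc by (simp add: d_def add_commute[of "\<ominus> (x \<otimes> t)"])
      finally have "d = w \<otimes> t \<oplus> \<ominus> (t \<otimes> w)" ..
      then have "nrm d \<le> nrm (w \<otimes> t) + nrm (t \<otimes> w)"
        using norm_triangle[of "w \<otimes> t" "\<ominus> (t \<otimes> w)"] wc tc by (simp add: norm_scale)
      also have "\<dots> \<le> nrm w * nrm t + nrm t * nrm w"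
        using norm_mul_le[OF wc tc] norm_mul_le[OF tc wc] by linarith
      also have "\<dots> = 2 * nrm t * nrm w" by simp
      finally show ?thesis by (simp only: w_def)
    qed
    have small: "nrm d \<le> 0 + e" if e: "e > 0" for e
    proof -
      have nt: "nrm t \<ge> 0" using tc norm_ge_zero by blast
      have "e / (2 * nrm t + 1) > 0" using e nt by simp
      then obtain N where N: "\<forall>k\<ge>N. nrm (ca_diff A (s k) x) < e / (2 * nrm t + 1)"
        using lim by blast
      have "nrm d \<le> 2 * nrm t * nrm (ca_diff A (s N) x)" by (rule bound)
      also have "\<dots> \<le> 2 * nrm t * (e / (2 * nrm t + 1))" using N nt by (intro mult_left_mono) auto
      also have "\<dots> \<le> e" using e nt by (simp add: field_simps)
      finally show ?thesis by simp
    qed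
    have "nrm d \<le> 0" using small by (rule field_le_epsilon)
    then have "nrm d = 0" using norm_ge_zero[OF dc] by linarith
    then have "d = \<zero>" using norm_eq_zero_iff[OF dc] by blast
    then show ?thesis using tc x unfolding d_def by (auto intro: add_neg_eq_zero_imp_eq)
  qed
  with x show ?thesis unfolding commutant_def by auto
qed

lemma unital_cstar_commutant:
  assumes "S \<subseteq> carrier" "\<And>s. s \<in> S \<Longrightarrow> star s \<in> S"
  shows "unital_cstar_algebra (A\<lparr>ca_carrier := commutant A S\<rparr>)"
proof (rule unital_cstar_subalgebra)
  fix s :: "nat \<Rightarrow> 'a" and x
  assume "\<forall>k. s k \<in> commutant A S" "x \<in> carrier" "\<forall>e>0. \<exists>N. \<forall>k\<ge>N. nrm (ca_diff A (s k) x) < e"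
  then show "x \<in> commutant A S" by (rule commutant_limit[OF assms(1)])
qed (use assms commutant_subset_carrier in \<open>auto intro: commutant_closed commutant_star\<close>)

lemma bicommutant_commute:
  assumes "commuting_star_set A S" "x \<in> bicommutant A S" "y \<in> bicommutant A S"
  shows "x \<otimes> y = y \<otimes> x"
proof -
  have "S \<subseteq> commutant A S" using assms(1) unfolding commuting_star_set_def commutant_def by auto
  then have "y \<in> commutant A S"
    using assms(3) commutant_antimono subset_bicommutant[of "commutant A S"] commutant_subset_carrier
    unfolding bicommutant_def by blast
  with assms(2) show ?thesis unfolding bicommutant_def commutant_def by auto
qed

lemma commutative_bicommutant_algebra:
  assumes "commuting_star_set A S"
  shows "commutative_cstar (bicommutant_algebra A S)"
proof -
  have "S \<subseteq> carrier" "\<And>s. s \<in> S \<Longrightarrow> star s \<in> S"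
    using assms unfolding commuting_star_set_def by auto
  then have "unital_cstar_algebra (bicommutant_algebra A S)"
    unfolding bicommutant_algebra_def bicommutant_def
    by (intro unital_cstar_commutant commutant_subset_carrier commutant_star)
  with bicommutant_commute[OF assms] show ?thesis
    unfolding commutative_cstar_def bicommutant_algebra_def by (simp add: carrier_update_simps)
qed

lemma cstar_mor_inclusion:
  assumes "T \<subseteq> T'" "T' \<subseteq> carrier" "\<one> \<in> T"
    "\<And>x y. x \<in> T \<Longrightarrow> y \<in> T \<Longrightarrow> x \<oplus> y \<in> T" "\<And>x y. x \<in> T \<Longrightarrow> y \<in> T \<Longrightarrow> x \<otimes> y \<in> T"
    "\<And>c x. x \<in> T \<Longrightarrow> scale c x \<in> T" "\<And>x. x \<in> T \<Longrightarrow> star x \<in> T"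
  shows "cstar_mor (A\<lparr>ca_carrier := T\<rparr>) (A\<lparr>ca_carrier := T'\<rparr>) (restrict (\<lambda>x. x) T)"
  using assms unfolding cstar_mor_def cstar_hom_def by (auto simp: carrier_update_simps)

lemma cstar_mor_bicommutant_inclusion:
  assumes "commuting_star_set A S" "T' \<subseteq> carrier" "bicommutant A S \<subseteq> T'"
  shows "cstar_mor (bicommutant_algebra A S) (A\<lparr>ca_carrier := T'\<rparr>) (restrict (\<lambda>x. x) (bicommutant A S))"
proof -
  have "commutant A S \<subseteq> carrier" by (rule commutant_subset_carrier)
  moreover have "\<And>x. x \<in> commutant A S \<Longrightarrow> star x \<in> commutant A S"
    using assms(1) unfolding commuting_star_set_def by (intro commutant_star) auto
  ultimately show ?thesis
    unfolding bicommutant_algebra_def using assms(2,3) unfolding bicommutant_def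
    by (intro cstar_mor_inclusion commutant_closed) (auto intro: commutant_star)
qed

lemma one_not_in_proper_ideal:
  assumes "cstar_ideal A M" "M \<noteq> carrier"
  shows "\<one> \<notin> M"
proof
  assume "\<one> \<in> M"
  then have "a \<in> M" if "a \<in> carrier" for a
    using assms(1) that mul_one_right[of a] unfolding cstar_ideal_def by metis
  then show False using assms unfolding cstar_ideal_def by blast
qed

lemma ideal_quotient:
  assumes comm: "\<And>x y. x \<in> carrier \<Longrightarrow> y \<in> carrier \<Longrightarrow> x \<otimes> y = y \<otimes> x"
    and M: "cstar_ideal A M" and q: "q \<in> carrier"
  shows "cstar_ideal A {x \<in> carrier. x \<otimes> q \<in> M}"
  unfolding cstar_ideal_def
proof (intro conjI ballI)
  have add: "\<And>x y. x \<in> M \<Longrightarrow> y \<in> M \<Longrightarrow> x \<oplus> y \<in> M" and neg: "\<And>x. x \<in> M \<Longrightarrow> \<ominus> x \<in> M"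
    and mul: "\<And>x a. x \<in> M \<Longrightarrow> a \<in> carrier \<Longrightarrow> a \<otimes> x \<in> M"
    using M unfolding cstar_ideal_def by auto
  show "\<zero> \<in> {x \<in> carrier. x \<otimes> q \<in> M}" using M q unfolding cstar_ideal_def by simp
  fix x y assume x: "x \<in> {x \<in> carrier. x \<otimes> q \<in> M}"
  show "\<ominus> x \<in> {x \<in> carrier. x \<otimes> q \<in> M}" using x q neg by (simp add: scale_mul_left)
  show "y \<otimes> x \<in> {x \<in> carrier. x \<otimes> q \<in> M}" "x \<otimes> y \<in> {x \<in> carrier. x \<otimes> q \<in> M}"
    if "y \<in> carrier" using x q that mul comm[of x y] by (simp_all add: mul_assoc)
  show "x \<oplus> y \<in> {x \<in> carrier. x \<otimes> q \<in> M}" if "y \<in> {x \<in> carrier. x \<otimes> q \<in> M}"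
    using x q that add by (simp add: distrib_right)
qed auto

lemma ex1_not_in_maximal_ideal:
  assumes comm: "\<And>x y. x \<in> carrier \<Longrightarrow> y \<in> carrier \<Longrightarrow> x \<otimes> y = y \<otimes> x"
    and M: "maximal_ideal A M"
    and Q: "\<And>i. i < m \<Longrightarrow> Q i \<in> carrier"
    and orth: "\<And>i j. i < m \<Longrightarrow> j < m \<Longrightarrow> i \<noteq> j \<Longrightarrow> Q i \<otimes> Q j = \<zero>"
    and sum: "ca_sum A Q m = \<one>"
  shows "\<exists>!i. i < m \<and> Q i \<notin> M"
proof -
  have ideal: "cstar_ideal A M" and proper: "M \<noteq> carrier"
    and maximal: "\<And>J. cstar_ideal A J \<Longrightarrow> M \<subseteq> J \<Longrightarrow> J \<noteq> carrier \<Longrightarrow> J = M"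
    using M unfolding maximal_ideal_def by auto
  have "\<exists>i. i < m \<and> Q i \<notin> M"
  proof (rule ccontr)
    assume "\<not> ?thesis"
    then have "ca_sum A Q k \<in> M" if "k \<le> m" for k
      using that ideal unfolding cstar_ideal_def by (induction k) auto
    then show False using sum one_not_in_proper_ideal[OF ideal proper] by force
  qed
  moreover have "i = j" if i: "i < m" "Q i \<notin> M" and j: "j < m" "Q j \<notin> M" for i j
  proof (rule ccontr)
    assume "i \<noteq> j"
    define J where "J = {x \<in> carrier. x \<otimes> Q j \<in> M}"
    have "cstar_ideal A J" unfolding J_def using Q j by (intro ideal_quotient[OF comm ideal]) auto
    moreover have "M \<subseteq> J" using ideal Q j unfolding J_def cstar_ideal_def by auto
    moreover have "\<one> \<notin> J" using j Q unfolding J_def by simp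
    then have "J \<noteq> carrier" by auto
    ultimately have "J = M" by (rule maximal)
    moreover have "Q i \<in> J" using orth[OF i(1) j(1) \<open>i \<noteq> j\<close>] Q i ideal unfolding J_def cstar_ideal_def by simp
    ultimately show False using i by simp
  qed
  ultimately show ?thesis by blast
qed

end

section \<open>The valuation induced by a point of F\<close>

locale gelfand_point = unital_cstar B for B :: "'u cstar" +
  fixes F :: "'u cstar \<Rightarrow> 'v set"
    and Fmor :: "('u \<Rightarrow> 'u) \<Rightarrow> 'u cstar \<Rightarrow> 'u cstar \<Rightarrow> 'v \<Rightarrow> 'v"
    and \<eta> :: "'u cstar \<Rightarrow> 'v \<Rightarrow> 'u set"
    and x :: 'v
  assumes contravariant: "contravariant_functor F Fmor"
    and nat_iso: "gelf_nat_iso F Fmor \<eta>"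
    and point: "x \<in> F B"
begin

abbreviation inclusion :: "'u set \<Rightarrow> 'u \<Rightarrow> 'u" where
  "inclusion S \<equiv> restrict (\<lambda>y. y) (bicommutant B S)"

definition context_ideal :: "'u set \<Rightarrow> 'u set" where
  "context_ideal S = \<eta> (bicommutant_algebra B S) (Fmor (inclusion S) (bicommutant_algebra B S) B x)"

definition valued :: "'u \<Rightarrow> bool" where
  "valued p \<longleftrightarrow> p \<notin> context_ideal {p}"

lemma unital_cstar_bicommutant_algebra:
  "commuting_star_set B S \<Longrightarrow> unital_cstar_algebra (bicommutant_algebra B S)"
  using commutative_bicommutant_algebra unfolding commutative_cstar_def by blast

lemma cstar_mor_inclusion_into:
  "commuting_star_set B S \<Longrightarrow> cstar_mor (bicommutant_algebra B S) B (inclusion S)"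
  using cstar_mor_bicommutant_inclusion[of S carrier] commutant_subset_carrier
  unfolding bicommutant_def by simp

lemma cstar_mor_inclusion_between:
  "commuting_star_set B S \<Longrightarrow> commuting_star_set B S' \<Longrightarrow> S \<subseteq> S' \<Longrightarrow>
   cstar_mor (bicommutant_algebra B S) (bicommutant_algebra B S') (inclusion S)"
  using cstar_mor_bicommutant_inclusion[of S "bicommutant B S'"] bicommutant_mono[of S S']
    commutant_subset_carrier
  unfolding bicommutant_algebra_def bicommutant_def by simp

lemma maximal_context_ideal:
  assumes "commuting_star_set B S"
  shows "maximal_ideal (bicommutant_algebra B S) (context_ideal S)"
proof -
  have "Fmor (inclusion S) (bicommutant_algebra B S) B x \<in> F (bicommutant_algebra B S)"
    using contravariant point unital_cstar_algebra unital_cstar_bicommutant_algebra[OF assms]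
      cstar_mor_inclusion_into[OF assms]
    unfolding contravariant_functor_def by blast
  moreover have "bij_betw (\<eta> (bicommutant_algebra B S)) (F (bicommutant_algebra B S)) (Gelf (bicommutant_algebra B S))"
    using nat_iso commutative_bicommutant_algebra[OF assms] unfolding gelf_nat_iso_def by blast
  ultimately show ?thesis unfolding context_ideal_def Gelf_def using bij_betwE by fastforce
qed

lemma context_ideal_restrict:
  assumes S: "commuting_star_set B S" and S': "commuting_star_set B S'" and "S \<subseteq> S'"
  shows "context_ideal S = bicommutant B S \<inter> context_ideal S'"
proof -
  let ?C = "bicommutant_algebra B S" and ?C' = "bicommutant_algebra B S'"
  have incl: "cstar_mor ?C ?C' (inclusion S)" by (rule cstar_mor_inclusion_between[OF S S' \<open>S \<subseteq> S'\<close>])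
  have "compose (ca_carrier ?C) (inclusion S') (inclusion S) = inclusion S"
    using bicommutant_mono[OF \<open>S \<subseteq> S'\<close>]
    by (auto simp: compose_def restrict_def fun_eq_iff bicommutant_algebra_def carrier_update_simps)
  then have "Fmor (inclusion S) ?C B x = Fmor (inclusion S) ?C ?C' (Fmor (inclusion S') ?C' B x)"
    using contravariant point unital_cstar_algebra unital_cstar_bicommutant_algebra[OF S]
      unital_cstar_bicommutant_algebra[OF S'] incl cstar_mor_inclusion_into[OF S']
    unfolding contravariant_functor_def by metis
  moreover have "Fmor (inclusion S') ?C' B x \<in> F ?C'"
    using contravariant point unital_cstar_algebra unital_cstar_bicommutant_algebra[OF S']
      cstar_mor_inclusion_into[OF S']
    unfolding contravariant_functor_def by blast
  ultimately have "context_ideal S = Gelf_mor (inclusion S) ?C (context_ideal S')"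
    using nat_iso commutative_bicommutant_algebra[OF S] commutative_bicommutant_algebra[OF S'] incl
    unfolding gelf_nat_iso_def context_ideal_def by metis
  then show ?thesis
    by (auto simp: Gelf_mor_def bicommutant_algebra_def carrier_update_simps)
qed

lemma ex1_valued:
  assumes Q: "\<And>i. i < m \<Longrightarrow> Q i \<in> carrier"
    and self_adjoint: "\<And>i. i < m \<Longrightarrow> ca_star B (Q i) = Q i"
    and orth: "\<And>i j. i < m \<Longrightarrow> j < m \<Longrightarrow> i \<noteq> j \<Longrightarrow> ca_mul B (Q i) (Q j) = ca_zero B"
    and sum: "ca_sum B Q m = ca_one B"
  shows "\<exists>!i. i < m \<and> valued (Q i)"
proof -
  define S where "S = Q ` {..<m}"
  have S: "commuting_star_set B S"
    unfolding commuting_star_set_def S_def using Q self_adjoint orth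
    by (auto simp: image_subset_iff) (metis orth)
  have single: "commuting_star_set B {Q i}" if "i < m" for i
    unfolding commuting_star_set_def using Q self_adjoint that by auto
  have valued_iff: "valued (Q i) \<longleftrightarrow> Q i \<notin> context_ideal S" if "i < m" for i
    using context_ideal_restrict[OF single[OF that] S] subset_bicommutant[of "{Q i}"] Q that
    unfolding valued_def S_def by auto
  have QS: "Q i \<in> bicommutant B S" if "i < m" for i
    using subset_bicommutant[of S] S that unfolding commuting_star_set_def S_def by blast
  interpret C: unital_cstar "bicommutant_algebra B S"
    by (rule unital_cstar.intro[OF unital_cstar_bicommutant_algebra[OF S]])
  have "ca_sum (bicommutant_algebra B S) Q m = ca_sum B Q m" for m
    by (induction m) (simp_all add: bicommutant_algebra_def carrier_update_simps)
  then have "\<exists>!i. i < m \<and> Q i \<notin> context_ideal S"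
    using bicommutant_commute[OF S] maximal_context_ideal[OF S] QS orth sum
    unfolding bicommutant_algebra_def
    by (intro C.ex1_not_in_maximal_ideal[unfolded bicommutant_algebra_def])
       (auto simp: carrier_update_simps)
  then show ?thesis using valued_iff by blast
qed

end

section \<open>Orthogonal resolutions and a Kochen-Specker configuration\<close>

definition cmat_mult :: "nat \<Rightarrow> (nat \<Rightarrow> nat \<Rightarrow> complex) \<Rightarrow> (nat \<Rightarrow> nat \<Rightarrow> complex) \<Rightarrow> nat \<Rightarrow> nat \<Rightarrow> complex" where
  "cmat_mult n X Y = (\<lambda>i j. \<Sum>k<n. X i k * Y k j)"

definition orthogonal_resolution :: "nat \<Rightarrow> (nat \<Rightarrow> nat \<Rightarrow> nat \<Rightarrow> complex) \<Rightarrow> bool" where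
  "orthogonal_resolution n Q \<longleftrightarrow>
     (\<forall>i<n. \<forall>r<n. \<forall>s<n. cnj (Q i s r) = Q i r s) \<and>
     (\<forall>i<n. \<forall>j<n. i \<noteq> j \<longrightarrow> (\<forall>r<n. \<forall>s<n. cmat_mult n (Q i) (Q j) r s = 0)) \<and>
     (\<forall>r<n. \<forall>s<n. (\<Sum>i<n. Q i r s) = (if r = s then 1 else 0))"

definition diag_unit :: "nat \<Rightarrow> nat \<Rightarrow> nat \<Rightarrow> complex" where
  "diag_unit d = (\<lambda>i j. if i = d \<and> j = d then 1 else 0)"

lemma diag_units_orthogonal: "d \<noteq> e \<Longrightarrow> cmat_mult n (diag_unit d) (diag_unit e) r s = 0"
  unfolding cmat_mult_def diag_unit_def by (intro sum.neutral) auto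

lemma orthogonal_resolution_diag_unit: "orthogonal_resolution n diag_unit"
  unfolding orthogonal_resolution_def
proof (intro conjI allI impI)
  fix i j r s :: nat assume "i \<noteq> j"
  then show "cmat_mult n (diag_unit i) (diag_unit j) r s = 0" by (rule diag_units_orthogonal)
next
  fix r s :: nat assume "r < n"
  then show "(\<Sum>i<n. diag_unit i r s) = (if r = s then 1 else 0)"
    unfolding diag_unit_def by (cases "r = s") (auto simp: sum.delta intro: sum.neutral)
qed (auto simp: diag_unit_def)

type_synonym ivec = "int \<times> int \<times> int"

definition coord :: "ivec \<Rightarrow> nat \<Rightarrow> int" where
  "coord u r = (if r = 0 then fst u else if r = 1 then fst (snd u) else snd (snd u))"

definition sqnorm :: "ivec \<Rightarrow> int" where
  "sqnorm u = coord u 0 * coord u 0 + coord u 1 * coord u 1 + coord u 2 * coord u 2"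

definition idot :: "ivec \<Rightarrow> ivec \<Rightarrow> int" where
  "idot u w = coord u 0 * coord w 0 + coord u 1 * coord w 1 + coord u 2 * coord w 2"

text \<open>The last conjunct says that the rank-one projections onto x, y, z add up to the identity;
  it follows from the others for nonzero vectors, but is simply evaluated here.\<close>

definition orthogonal_triad :: "ivec \<Rightarrow> ivec \<Rightarrow> ivec \<Rightarrow> bool" where
  "orthogonal_triad x y z \<longleftrightarrow> idot x y = 0 \<and> idot x z = 0 \<and> idot y z = 0 \<and>
    (\<forall>r<3. \<forall>s<3. of_int (coord x r * coord x s) / of_int (sqnorm x)
       + of_int (coord y r * coord y s) / of_int (sqnorm y)
       + of_int (coord z r * coord z s) / of_int (sqnorm z) = (if r = s then 1 else 0 :: complex))"

definition exactly_one :: "bool \<Rightarrow> bool \<Rightarrow> bool \<Rightarrow> bool" where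
  "exactly_one p q r \<longleftrightarrow> (p \<and> \<not> q \<and> \<not> r) \<or> (\<not> p \<and> q \<and> \<not> r) \<or> (\<not> p \<and> \<not> q \<and> r)"

definition ks_triads :: "(ivec \<times> ivec \<times> ivec) list" where
  "ks_triads = [((0,0,1),(1,2,0),(2,-1,0)),
    ((1,-1,-1),(1,-1,2),(1,1,0)),
    ((1,-1,-1),(1,0,1),(1,2,-1)),
    ((1,-2,-1),(1,0,1),(1,1,-1)),
    ((1,-1,0),(1,1,-2),(1,1,1)),
    ((1,-5,-2),(1,1,-2),(2,0,1)),
    ((0,1,0),(1,0,2),(2,0,-1)),
    ((1,-1,-2),(1,-1,1),(1,1,0)),
    ((1,-1,1),(1,0,-1),(1,2,1)),
    ((1,2,-1),(1,2,5),(2,-1,0)),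
    ((1,-1,-2),(1,5,-2),(2,0,1)),
    ((1,0,2),(2,-1,-1),(2,5,-1)),
    ((0,2,-1),(1,1,2),(5,-1,-2)),
    ((0,1,2),(1,-2,1),(5,2,-1)),
    ((0,1,1),(1,1,-1),(2,-1,1)),
    ((1,-2,-5),(1,-2,1),(2,1,0)),
    ((0,1,-1),(0,1,1),(1,0,0)),
    ((1,0,2),(2,-5,-1),(2,1,-1)),
    ((1,-5,2),(1,1,2),(2,0,-1)),
    ((1,-2,0),(2,1,-1),(2,1,5)),
    ((0,0,1),(1,-2,0),(2,1,0)),
    ((0,1,0),(1,0,-1),(1,0,1)),
    ((0,2,-1),(1,-1,-2),(5,1,2)),
    ((1,-2,1),(1,0,-1),(1,1,1)),
    ((0,0,1),(1,-1,0),(1,1,0)),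
    ((0,1,2),(1,2,-1),(5,-2,1)),
    ((1,-1,0),(1,1,-1),(1,1,2)),
    ((0,1,2),(0,2,-1),(1,0,0)),
    ((1,0,-2),(2,-1,1),(2,5,1)),
    ((0,0,1),(0,1,0),(1,0,0)),
    ((0,1,-1),(1,1,1),(2,-1,-1)),
    ((0,1,-1),(1,-1,-1),(2,1,1)),
    ((1,2,0),(2,-1,-5),(2,-1,1)),
    ((1,0,-2),(2,-5,1),(2,1,1)),
    ((0,1,0),(1,0,-2),(2,0,1)),
    ((0,1,1),(1,-1,1),(2,1,-1)),
    ((1,-2,0),(2,1,-5),(2,1,1))]"

lemma ks_triads_orthogonal: "\<forall>(x, y, z)\<in>set ks_triads. orthogonal_triad x y z"
proof -
  have "(\<forall>r<(3::nat). P r) \<longleftrightarrow> P 0 \<and> P 1 \<and> P 2" for P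
    by (auto simp: less_Suc_eq numeral_eq_Suc)
  then show ?thesis
    unfolding ks_triads_def orthogonal_triad_def idot_def sqnorm_def coord_def by simp
qed

lemma kochen_specker: "\<not> (\<forall>(x, y, z)\<in>set ks_triads. exactly_one (V x) (V y) (V z))"
  unfolding ks_triads_def exactly_one_def by (simp only: set_simps ball_simps prod.case) sat

definition block_pos :: "nat \<Rightarrow> nat \<Rightarrow> nat \<Rightarrow> nat" where
  "block_pos a b i = (if i = a then 0 else if i = b then 1 else 2)"

definition embed :: "nat \<Rightarrow> nat \<Rightarrow> nat \<Rightarrow> ivec \<Rightarrow> nat \<Rightarrow> int" where
  "embed a b c u i = (if i = a \<or> i = b \<or> i = c then coord u (block_pos a b i) else 0)"

definition ray_projection :: "nat \<Rightarrow> nat \<Rightarrow> nat \<Rightarrow> ivec \<Rightarrow> nat \<Rightarrow> nat \<Rightarrow> complex" where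
  "ray_projection a b c u = (\<lambda>i j. of_int (embed a b c u i * embed a b c u j) / of_int (sqnorm u))"

definition triad_resolution :: "nat \<Rightarrow> nat \<Rightarrow> nat \<Rightarrow> ivec \<Rightarrow> ivec \<Rightarrow> ivec \<Rightarrow> nat \<Rightarrow> nat \<Rightarrow> nat \<Rightarrow> complex" where
  "triad_resolution a b c x y z i =
     (if i = a then ray_projection a b c x else if i = b then ray_projection a b c y
      else if i = c then ray_projection a b c z else diag_unit i)"

locale three_coordinates =
  fixes n a b c :: nat
  assumes less: "a < n" "b < n" "c < n" and distinct: "a \<noteq> b" "a \<noteq> c" "b \<noteq> c"
begin

lemma sum_three: "(\<And>k. k \<noteq> a \<Longrightarrow> k \<noteq> b \<Longrightarrow> k \<noteq> c \<Longrightarrow> f k = 0) \<Longrightarrow> (\<Sum>k<n. f k) = f a + f b + f c"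
proof -
  assume "\<And>k. k \<noteq> a \<Longrightarrow> k \<noteq> b \<Longrightarrow> k \<noteq> c \<Longrightarrow> f k = 0"
  then have "(\<Sum>k<n. f k) = (\<Sum>k\<in>{a, b, c}. f k)"
    using less by (intro sum.mono_neutral_right) auto
  also have "\<dots> = f a + f b + f c" using distinct by (simp add: add.assoc)
  finally show ?thesis .
qed

lemma embed_simps:
  "embed a b c u a = coord u 0" "embed a b c u b = coord u 1" "embed a b c u c = coord u 2"
  "k \<noteq> a \<Longrightarrow> k \<noteq> b \<Longrightarrow> k \<noteq> c \<Longrightarrow> embed a b c u k = 0"
  unfolding embed_def block_pos_def using distinct by auto

lemma ray_projections_orthogonal:
  assumes "idot x y = 0"
  shows "cmat_mult n (ray_projection a b c x) (ray_projection a b c y) r s = 0"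
proof -
  let ?e = "\<lambda>u i. (of_int (embed a b c u i) :: complex)"
  have "cmat_mult n (ray_projection a b c x) (ray_projection a b c y) r s
      = (\<Sum>k<n. ?e x r * ?e y s * (?e x k * ?e y k)) / (of_int (sqnorm x) * of_int (sqnorm y))"
    unfolding cmat_mult_def ray_projection_def by (simp add: sum_divide_distrib algebra_simps)
  also have "(\<Sum>k<n. ?e x r * ?e y s * (?e x k * ?e y k)) = ?e x r * ?e y s * of_int (idot x y)"
    by (subst sum_three) (auto simp: embed_simps idot_def algebra_simps)
  finally show ?thesis using assms by simp
qed

lemma ray_projection_diag_unit_orthogonal:
  "d \<noteq> a \<Longrightarrow> d \<noteq> b \<Longrightarrow> d \<noteq> c \<Longrightarrow> cmat_mult n (ray_projection a b c u) (diag_unit d) r s = 0"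
  unfolding cmat_mult_def by (rule sum.neutral) (auto simp: diag_unit_def ray_projection_def embed_simps)

lemma diag_unit_ray_projection_orthogonal:
  "d \<noteq> a \<Longrightarrow> d \<noteq> b \<Longrightarrow> d \<noteq> c \<Longrightarrow> cmat_mult n (diag_unit d) (ray_projection a b c u) r s = 0"
  unfolding cmat_mult_def by (rule sum.neutral) (auto simp: diag_unit_def ray_projection_def embed_simps)

lemma orthogonal_resolution_triad:
  assumes "orthogonal_triad x y z"
  shows "orthogonal_resolution n (triad_resolution a b c x y z)"
  unfolding orthogonal_resolution_def
proof (intro conjI allI impI)
  fix i r s :: nat
  show "cnj (triad_resolution a b c x y z i s r) = triad_resolution a b c x y z i r s"
    unfolding triad_resolution_def ray_projection_def diag_unit_def by (auto simp: mult.commute)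
next
  have dots: "idot x y = 0" "idot x z = 0" "idot y z = 0" "idot y x = 0" "idot z x = 0" "idot z y = 0"
    using assms unfolding orthogonal_triad_def idot_def by (auto simp: mult.commute)
  fix i j r s :: nat assume "i < n" "j < n" "i \<noteq> j"
  then show "cmat_mult n (triad_resolution a b c x y z i) (triad_resolution a b c x y z j) r s = 0"
    unfolding triad_resolution_def using distinct dots
    by (auto simp: ray_projections_orthogonal ray_projection_diag_unit_orthogonal
        diag_unit_ray_projection_orthogonal diag_units_orthogonal)
next
  fix r s :: nat assume r: "r < n" and s: "s < n"
  let ?P = "\<lambda>u. ray_projection a b c u r s"
  have "(\<Sum>i<n. triad_resolution a b c x y z i r s)
      = (\<Sum>i<n. (if i = a then ?P x else if i = b then ?P y else if i = c then ?P z else 0)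
               + (if i = r \<and> r = s \<and> r \<noteq> a \<and> r \<noteq> b \<and> r \<noteq> c then 1 else 0))"
    by (rule sum.cong) (auto simp: triad_resolution_def diag_unit_def)
  also have "\<dots> = ?P x + ?P y + ?P z + (if r = s \<and> r \<noteq> a \<and> r \<noteq> b \<and> r \<noteq> c then 1 else 0)"
    using r distinct by (simp add: sum.distrib sum_three sum.delta)
  also have "\<dots> = (if r = s then 1 else 0)"
  proof (cases "(r = a \<or> r = b \<or> r = c) \<and> (s = a \<or> s = b \<or> s = c)")
    case True
    then have pos: "block_pos a b r < 3" "block_pos a b s < 3" "block_pos a b r = block_pos a b s \<longleftrightarrow> r = s"
      using distinct unfolding block_pos_def by auto
    have "embed a b c u r = coord u (block_pos a b r)" "embed a b c u s = coord u (block_pos a b s)" for u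
      using True unfolding embed_def by auto
    then have "?P x + ?P y + ?P z = (if block_pos a b r = block_pos a b s then 1 else 0)"
      using assms pos(1,2) unfolding orthogonal_triad_def ray_projection_def by simp
    then show ?thesis using True pos(3) by auto
  next
    case False
    then have "?P u = 0" for u unfolding ray_projection_def embed_def by auto
    then show ?thesis using False by auto
  qed
  finally show "(\<Sum>i<n. triad_resolution a b c x y z i r s) = (if r = s then 1 else 0)" .
qed

end

definition scalar_matrix :: "'a cstar \<Rightarrow> nat \<Rightarrow> (nat \<Rightarrow> nat \<Rightarrow> complex) \<Rightarrow> nat \<Rightarrow> nat \<Rightarrow> 'a" where
  "scalar_matrix A n X = (\<lambda>i j. if i < n \<and> j < n then ca_scale A (X i j) (ca_one A) else ca_zero A)"

context unital_cstar
begin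

lemma scalar_matrix_closed: "scalar_matrix A n X \<in> ca_carrier (mat_cstar A n)"
  unfolding scalar_matrix_def mat_cstar_def by auto

lemma scalar_matrix_mul:
  "ca_mul (mat_cstar A n) (scalar_matrix A n X) (scalar_matrix A n Y) = scalar_matrix A n (cmat_mult n X Y)"
proof -
  have "ca_sum A (\<lambda>k. scalar_matrix A n X i k \<otimes> scalar_matrix A n Y k j) n = scale (\<Sum>k<n. X i k * Y k j) \<one>"
    if "i < n" "j < n" for i j
  proof -
    have "ca_sum A (\<lambda>k. scalar_matrix A n X i k \<otimes> scalar_matrix A n Y k j) n
        = ca_sum A (\<lambda>k. scale (X i k * Y k j) \<one>) n"
      using that by (intro ca_sum_cong) (simp add: scalar_matrix_def scale_one_mul)
    then show ?thesis by (simp add: ca_sum_scale_one)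
  qed
  then show ?thesis unfolding mat_cstar_def cmat_mult_def by (auto simp: fun_eq_iff scalar_matrix_def)
qed

lemma scalar_matrix_add:
  "ca_add (mat_cstar A n) (scalar_matrix A n X) (scalar_matrix A n Y) = scalar_matrix A n (\<lambda>i j. X i j + Y i j)"
  unfolding mat_cstar_def scalar_matrix_def by (auto simp: fun_eq_iff scale_one_add)

lemma scalar_matrix_star:
  "ca_star (mat_cstar A n) (scalar_matrix A n X) = scalar_matrix A n (\<lambda>i j. cnj (X j i))"
  unfolding mat_cstar_def scalar_matrix_def by (auto simp: fun_eq_iff star_scale)

lemma scalar_matrix_one: "ca_one (mat_cstar A n) = scalar_matrix A n (\<lambda>i j. if i = j then 1 else 0)"
  unfolding mat_cstar_def scalar_matrix_def by (auto simp: fun_eq_iff)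

lemma scalar_matrix_scale_zero:
  "ca_scale (mat_cstar A n) 0 (scalar_matrix A n X) = scalar_matrix A n (\<lambda>i j. 0)"
  unfolding mat_cstar_def scalar_matrix_def by (auto simp: fun_eq_iff)

lemma scalar_matrix_cong:
  "(\<And>i j. i < n \<Longrightarrow> j < n \<Longrightarrow> X i j = Y i j) \<Longrightarrow> scalar_matrix A n X = scalar_matrix A n Y"
  unfolding scalar_matrix_def by (auto simp: fun_eq_iff)

end

lemma cstar_hom_inv_into:
  assumes B: "unital_cstar_algebra B" and g: "cstar_hom B C g"
    and bij: "bij_betw g (ca_carrier B) (ca_carrier C)"
  shows "cstar_hom C B (inv_into (ca_carrier B) g)"
proof -
  interpret B: unital_cstar B by (rule unital_cstar.intro[OF B])
  let ?h = "inv_into (ca_carrier B) g"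
  have h: "?h X \<in> ca_carrier B" "g (?h X) = X" if "X \<in> ca_carrier C" for X
    using that bij by (auto simp: bij_betw_def intro: inv_into_into f_inv_into_f)
  have hg: "?h (g y) = y" if "y \<in> ca_carrier B" for y
    using that bij by (simp add: bij_betw_def)
  have "?h (ca_add C X Y) = ca_add B (?h X) (?h Y)" "?h (ca_mul C X Y) = ca_mul B (?h X) (?h Y)"
    if "X \<in> ca_carrier C" "Y \<in> ca_carrier C" for X Y
    using g h[OF that(1)] h[OF that(2)] hg B.add_closed B.mul_closed unfolding cstar_hom_def by metis+
  moreover have "?h (ca_scale C c X) = ca_scale B c (?h X)" "?h (ca_star C X) = ca_star B (?h X)"
    if "X \<in> ca_carrier C" for c X
    using g h[OF that] hg B.scale_closed B.star_closed unfolding cstar_hom_def by metis+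
  moreover have "?h (ca_one C) = ca_one B"
    using g hg B.one_closed unfolding cstar_hom_def by metis
  ultimately show ?thesis using h unfolding cstar_hom_def by auto
qed

locale matrix_gelfand_point = gelfand_point B F Fmor \<eta> x
  for B :: "'u cstar" and F :: "'u cstar \<Rightarrow> 'v set" and Fmor \<eta> x +
  fixes A :: "'a cstar" and n :: nat and h :: "(nat \<Rightarrow> nat \<Rightarrow> 'a) \<Rightarrow> 'u"
  assumes coefficients: "unital_cstar_algebra A"
    and hom: "cstar_hom (mat_cstar A n) B h"
begin

interpretation A: unital_cstar A by (rule unital_cstar.intro[OF coefficients])

definition scalar :: "(nat \<Rightarrow> nat \<Rightarrow> complex) \<Rightarrow> 'u" where
  "scalar X = h (scalar_matrix A n X)"

lemma hom_preserves:
  "\<And>X Y. X \<in> ca_carrier (mat_cstar A n) \<Longrightarrow> Y \<in> ca_carrier (mat_cstar A n) \<Longrightarrow>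
     h (ca_add (mat_cstar A n) X Y) = ca_add B (h X) (h Y)"
  "\<And>X Y. X \<in> ca_carrier (mat_cstar A n) \<Longrightarrow> Y \<in> ca_carrier (mat_cstar A n) \<Longrightarrow>
     h (ca_mul (mat_cstar A n) X Y) = ca_mul B (h X) (h Y)"
  "\<And>c X. X \<in> ca_carrier (mat_cstar A n) \<Longrightarrow> h (ca_scale (mat_cstar A n) c X) = ca_scale B c (h X)"
  "\<And>X. X \<in> ca_carrier (mat_cstar A n) \<Longrightarrow> h (ca_star (mat_cstar A n) X) = ca_star B (h X)"
  "h (ca_one (mat_cstar A n)) = ca_one B"
  using hom unfolding cstar_hom_def by auto

lemma scalar_closed: "scalar X \<in> carrier"
  using hom A.scalar_matrix_closed unfolding scalar_def cstar_hom_def by blast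

lemma scalar_mul: "ca_mul B (scalar X) (scalar Y) = scalar (cmat_mult n X Y)"
  unfolding scalar_def by (simp flip: hom_preserves(2) add: A.scalar_matrix_closed A.scalar_matrix_mul)

lemma scalar_star: "ca_star B (scalar X) = scalar (\<lambda>i j. cnj (X j i))"
  unfolding scalar_def by (simp flip: hom_preserves(4) add: A.scalar_matrix_closed A.scalar_matrix_star)

lemma scalar_one: "scalar (\<lambda>i j. if i = j then 1 else 0) = ca_one B"
  unfolding scalar_def by (simp flip: hom_preserves(5) add: A.scalar_matrix_one)

lemma scalar_zero: "scalar (\<lambda>i j. 0) = ca_zero B"
proof -
  have "scalar (\<lambda>i j. 0) = ca_scale B 0 (scalar (\<lambda>i j. 0))"
    unfolding scalar_def
    by (simp flip: hom_preserves(3) add: A.scalar_matrix_closed A.scalar_matrix_scale_zero)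
  then show ?thesis using scalar_closed by simp
qed

lemma scalar_cong: "(\<And>i j. i < n \<Longrightarrow> j < n \<Longrightarrow> X i j = Y i j) \<Longrightarrow> scalar X = scalar Y"
  unfolding scalar_def by (metis A.scalar_matrix_cong)

lemma scalar_sum: "ca_sum B (\<lambda>i. scalar (X i)) m = scalar (\<lambda>r s. \<Sum>i<m. X i r s)"
proof (induction m)
  case 0
  then show ?case by (simp add: scalar_zero)
next
  case (Suc m)
  then show ?case
    by (simp add: scalar_def flip: hom_preserves(1) add: A.scalar_matrix_closed A.scalar_matrix_add)
qed

lemma ex1_valued_resolution:
  assumes "orthogonal_resolution n Q"
  shows "\<exists>!i. i < n \<and> valued (scalar (Q i))"
proof (rule ex1_valued)
  have hermitian: "\<And>i r s. i < n \<Longrightarrow> r < n \<Longrightarrow> s < n \<Longrightarrow> cnj (Q i s r) = Q i r s"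
    and orth: "\<And>i j r s. i < n \<Longrightarrow> j < n \<Longrightarrow> i \<noteq> j \<Longrightarrow> r < n \<Longrightarrow> s < n \<Longrightarrow> cmat_mult n (Q i) (Q j) r s = 0"
    and sum: "\<And>r s. r < n \<Longrightarrow> s < n \<Longrightarrow> (\<Sum>i<n. Q i r s) = (if r = s then 1 else 0)"
    using assms unfolding orthogonal_resolution_def by auto
  show "scalar (Q i) \<in> carrier" for i by (rule scalar_closed)
  show "ca_star B (scalar (Q i)) = scalar (Q i)" if "i < n" for i
    unfolding scalar_star using that by (intro scalar_cong) (simp add: hermitian)
  show "ca_mul B (scalar (Q i)) (scalar (Q j)) = ca_zero B" if "i < n" "j < n" "i \<noteq> j" for i j
    unfolding scalar_mul scalar_zero[symmetric] using that by (intro scalar_cong) (simp add: orth)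
  show "ca_sum B (\<lambda>i. scalar (Q i)) n = ca_one B"
    unfolding scalar_sum scalar_one[symmetric] by (intro scalar_cong) (simp add: sum)
qed

lemma dimension_less_three: "n < 3"
proof (rule ccontr)
  assume "\<not> n < 3"
  obtain k where k: "k < n" "valued (scalar (diag_unit k))"
    and k_unique: "\<And>i. i < n \<Longrightarrow> valued (scalar (diag_unit i)) \<Longrightarrow> i = k"
    using ex1_valued_resolution[OF orthogonal_resolution_diag_unit] by blast
  define b where "b = (if k = 0 then 1 else (0::nat))"
  define c where "c = (if k = 0 \<or> k = 1 then 2 else (1::nat))"
  interpret three_coordinates n k b c
    using \<open>\<not> n < 3\<close> k(1) by unfold_locales (auto simp: b_def c_def)
  define V where "V u = valued (scalar (ray_projection k b c u))" for u
  \<comment> \<open>The unique valued diagonal unit sits at coordinate k, so in a triad resolution padded by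
    the other diagonal units the valued member is one of the three rays.\<close>
  have "exactly_one (V x) (V y) (V z)" if triad: "orthogonal_triad x y z" for x y z
  proof -
    define W where "W i = valued (scalar (triad_resolution k b c x y z i))" for i
    obtain i where i: "i < n" "W i" and i_unique: "\<And>j. j < n \<Longrightarrow> W j \<Longrightarrow> j = i"
      using ex1_valued_resolution[OF orthogonal_resolution_triad[OF triad]] unfolding W_def by blast
    have W_rays: "W k = V x" "W b = V y" "W c = V z"
      unfolding W_def V_def triad_resolution_def using distinct by auto
    have "i = k \<or> i = b \<or> i = c"
      using i k_unique distinct unfolding W_def triad_resolution_def by (auto split: if_splits)
    then show ?thesis
      unfolding exactly_one_def W_rays[symmetric] using i i_unique less distinct by metis
  qed
  then show False using kochen_specker[of V] ks_triads_orthogonal by auto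
qed

end

theorem corollary5p9:
  fixes F :: "'u cstar \<Rightarrow> 'v set"
    and Fmor :: "('u \<Rightarrow> 'u) \<Rightarrow> 'u cstar \<Rightarrow> 'u cstar \<Rightarrow> 'v \<Rightarrow> 'v"
    and A :: "'a cstar" and B :: "'u cstar" and n :: nat
  assumes "contravariant_functor F Fmor"
    and "\<exists>\<eta>. gelf_nat_iso F Fmor \<eta>"
    and "unital_cstar_algebra A"
    and "unital_cstar_algebra B"
    and "cstar_isomorphic B (mat_cstar A n)"
    and "n \<ge> 3"
  shows "F B = {}"
proof (rule ccontr)
  assume "F B \<noteq> {}"
  then obtain x where x: "x \<in> F B" by blast
  obtain \<eta> where \<eta>: "gelf_nat_iso F Fmor \<eta>" using assms(2) by blast
  obtain g where "cstar_hom B (mat_cstar A n) g" "bij_betw g (ca_carrier B) (ca_carrier (mat_cstar A n))"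
    using assms(5) unfolding cstar_isomorphic_def by blast
  then have "cstar_hom (mat_cstar A n) B (inv_into (ca_carrier B) g)"
    using assms(4) by (intro cstar_hom_inv_into)
  then interpret matrix_gelfand_point B F Fmor \<eta> x A n "inv_into (ca_carrier B) g"
    using assms x \<eta> by unfold_locales
  show False using dimension_less_three assms(6) by simp
qed

end
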